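(* Let $\kappa$ be an admissible kernel induced by $\mathbf a:\mathbb R^D\to\mathcal H$, and let $\mathcal S=\{\theta^\star_\ell\}_{\ell=1}^{m}\subset\mathbb R^D$ (pairwise distinct) be admissible with respect to $\kappa$. Then (i) the atoms $\mathbf a(\theta^\star_1),\dots,\mathbf a(\theta^\star_m)$ are linearly independent; (ii) with $\mathbf G\in\mathbb R^{m\times m}$, $\mathbf G[\ell,\ell']=\kappa(\theta^\star_\ell,\theta^\star_{\ell'})$, and $\mathbf g_\theta\in\mathbb R^m$, $\mathbf g_\theta[\ell]=\kappa(\theta,\theta^\star_\ell)$, one has $\|\mathbf G^{-1}\mathbf g_\theta\|_1<1$ for every $\theta\in\mathbb R^D\setminus\mathcal S$.
   Context: Kernel: $\kappa(\theta,\theta')=\langle\mathbf a(\theta),\mathbf a(\theta')\rangle$ on a real Hilbert space $\mathcal H$. The kernel is admissible if: (i) $\kappa(\theta,\theta)=1$ for all $\theta$; $\lim_{\theta'\to\theta}\kappa(\theta,\theta')=1$ for all $\theta$; for every $\varepsilon>0$ and $\theta$ there is a compact $K$ with $\sup_{\theta'\notin K}\kappa(\theta',\theta)<\varepsilon$; (ii) $0\le\kappa(\theta,\theta')<1$ whenever $\theta\ne\theta'$. A support $\{\theta^\star_\ell\}_{\ell=1}^k$ is admissible with respect to $\kappa$ if for every nonempty $T\subseteq\{1,\dots,k\}$ and every positive reals $\{c_\ell\}_{\ell\in T}$ with $\sum_{\ell\in T}c_\ell<1$, setting $\psi(\theta)=\sum_{\ell\in T}c_\ell\kappa(\theta,\theta^\star_\ell)$: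 (i) the set of global maximizers of $\psi$ over $\mathbb R^D$ is contained in $\{\theta^\star_\ell\}_{\ell\in T}$; (ii) if $\ell\in\{1,\dots,k\}\setminus T$ satisfies $\psi(\theta)-\kappa(\theta,\theta^\star_\ell)\le 0$ for all $\theta\in\{\theta^\star_{\ell'}\}_{\ell'\in T}$, then $\psi(\theta)-\kappa(\theta,\theta^\star_\ell)\le0$ for all $\theta\in\mathbb R^D$. *)

theory Defs
  imports "HOL-Analysis.Analysis"
begin

definition kern :: "('a \<Rightarrow> 'h::real_inner) \<Rightarrow> 'a \<Rightarrow> 'a \<Rightarrow> real" where
  "kern a \<theta> \<theta>' = inner (a \<theta>) (a \<theta>')"

text \<open>Admissible kernel. The condition sup over the complement of K of kern(theta',theta) being
  less than eps is written as: some c < eps bounds kern(theta',theta) for all theta' outside K.\<close>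
definition admissible_kernel :: "('a::topological_space \<Rightarrow> 'h::real_inner) \<Rightarrow> bool" where
  "admissible_kernel a \<longleftrightarrow>
     (\<forall>\<theta>. kern a \<theta> \<theta> = 1) \<and>
     (\<forall>\<theta>. ((\<lambda>\<theta>'. kern a \<theta> \<theta>') \<longlongrightarrow> 1) (at \<theta>)) \<and>
     (\<forall>\<epsilon>>0. \<forall>\<theta>. \<exists>K. compact K \<and> (\<exists>c<\<epsilon>. \<forall>\<theta>'. \<theta>' \<notin> K \<longrightarrow> kern a \<theta>' \<theta> \<le> c)) \<and>
     (\<forall>\<theta> \<theta>'. \<theta> \<noteq> \<theta>' \<longrightarrow> 0 \<le> kern a \<theta> \<theta>' \<and> kern a \<theta> \<theta>' < 1)"

text \<open>Admissible support, indexed by a finite type 'm (the index set {1..k}).\<close>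
definition admissible_support :: "('a \<Rightarrow> 'h::real_inner) \<Rightarrow> ('m::finite \<Rightarrow> 'a) \<Rightarrow> bool" where
  "admissible_support a \<theta>s \<longleftrightarrow>
     (\<forall>T c. T \<noteq> {} \<longrightarrow> (\<forall>l\<in>T. 0 < c l) \<longrightarrow> sum c T < 1 \<longrightarrow>
        (\<forall>\<theta>. (\<forall>\<theta>'. (\<Sum>l\<in>T. c l * kern a \<theta>' (\<theta>s l)) \<le> (\<Sum>l\<in>T. c l * kern a \<theta> (\<theta>s l)))
              \<longrightarrow> \<theta> \<in> \<theta>s ` T) \<and>
        (\<forall>l. l \<notin> T \<longrightarrow>
           (\<forall>\<theta>\<in>\<theta>s ` T. (\<Sum>l'\<in>T. c l' * kern a \<theta> (\<theta>s l')) - kern a \<theta> (\<theta>s l) \<le> 0) \<longrightarrow>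
           (\<forall>\<theta>. (\<Sum>l'\<in>T. c l' * kern a \<theta> (\<theta>s l')) - kern a \<theta> (\<theta>s l) \<le> 0)))"

definition gram :: "('a \<Rightarrow> 'h::real_inner) \<Rightarrow> ('m::finite \<Rightarrow> 'a) \<Rightarrow> real^'m^'m" where
  "gram a \<theta>s = (\<chi> l l'. kern a (\<theta>s l) (\<theta>s l'))"

definition gvec :: "('a \<Rightarrow> 'h::real_inner) \<Rightarrow> ('m::finite \<Rightarrow> 'a) \<Rightarrow> 'a \<Rightarrow> real^'m" where
  "gvec a \<theta>s \<theta> = (\<chi> l. kern a \<theta> (\<theta>s l))"

end

theory Submission
  imports Defs
begin

(* The atoms are linearly independent: if a combination of them vanishes, its positive and negative
   parts define the same function t \<mapsto> <a t, v>, a positive combination of kernel sections centred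
   on two disjoint parts of the support, and admissibility puts its maximizers in both parts.

   G^-1 g_\<theta> is the coefficient vector c of the orthogonal projection of a \<theta> onto the span of the
   atoms.  By induction on the index set T, such coefficients are nonnegative with sum below 1.
   If r_l is the residual of atom l against the other atoms of T, then c_l |r_l|^2 = <a \<theta>, r_l>,
   which is nonnegative by the second admissibility condition applied to the projection
   coefficients of atom l (nonnegative with sum below 1 by induction).  The combination q of atoms
   with <\<Sigma> q_i a_i, a_j> = 1 for j \<in> T has q_l |r_l|^2 = 1 - (sum of those coefficients) > 0, so
   \<psi> = \<Sigma> q_l \<kappa>(., \<theta>_l) has maximum 1, attained only on the support, while \<Sigma> c_l = \<psi>(\<theta>). *)

definition lincomb :: "('m \<Rightarrow> 'h::real_vector) \<Rightarrow> 'm set \<Rightarrow> ('m \<Rightarrow> real) \<Rightarrow> 'h" where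
  "lincomb v T c = (\<Sum>l\<in>T. c l *\<^sub>R v l)"

definition projection_coeffs ::
  "('m \<Rightarrow> 'h::real_inner) \<Rightarrow> 'm set \<Rightarrow> 'h \<Rightarrow> ('m \<Rightarrow> real) \<Rightarrow> bool" where
  "projection_coeffs v T x c \<longleftrightarrow>
     (\<forall>l. l \<notin> T \<longrightarrow> c l = 0) \<and> (\<forall>j\<in>T. inner (x - lincomb v T c) (v j) = 0)"

lemma inner_lincomb_left: "inner (lincomb v T c) y = (\<Sum>l\<in>T. c l * inner (v l) y)"
  by (simp add: lincomb_def inner_sum_left)

lemma inner_lincomb_right: "inner y (lincomb v T c) = (\<Sum>l\<in>T. c l * inner y (v l))"
  by (simp add: lincomb_def inner_sum_right)

lemma lincomb_orthogonal:
  assumes "\<And>j. j \<in> T \<Longrightarrow> inner y (v j) = 0"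
  shows "inner (lincomb v T c) y = 0"
  unfolding inner_lincomb_left using assms by (simp add: inner_commute)

lemma lincomb_remove:
  "finite T \<Longrightarrow> l \<in> T \<Longrightarrow> lincomb v T c = c l *\<^sub>R v l + lincomb v (T - {l}) c"
  by (simp add: lincomb_def sum.remove)

lemma lincomb_restrict_UNIV:
  "lincomb v UNIV (\<lambda>i. if i \<in> T then c i else 0) = lincomb v T (c :: 'm::finite \<Rightarrow> real)"
  by (simp add: lincomb_def if_distrib[of "\<lambda>x. x *\<^sub>R _"] sum.inter_restrict[symmetric] cong: if_cong)

lemma projection_coeffs_orthogonal:
  "projection_coeffs v T x c \<Longrightarrow> inner (lincomb v T q) (x - lincomb v T c) = 0"
  by (rule lincomb_orthogonal) (simp add: projection_coeffs_def)

lemma projection_coeffs_exist: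
  "finite T \<Longrightarrow> \<exists>c. projection_coeffs v T x c"
proof (induction T arbitrary: x rule: finite_induct)
  case empty
  then show ?case by (auto simp: projection_coeffs_def)
next
  case (insert l T)
  obtain c where c: "projection_coeffs v T x c" using insert.IH by blast
  obtain d where d: "projection_coeffs v T (v l) d" using insert.IH by blast
  define r where "r = v l - lincomb v T d"
  \<comment> \<open>Adjoin the component of \<open>x\<close> along the part of \<open>v l\<close> orthogonal to the span of \<open>v ` T\<close>;
    if that part vanishes, then \<open>\<alpha> = 0\<close> because \<open>t / 0 = 0\<close>.\<close>
  define \<alpha> where "\<alpha> = inner x r / inner r r"
  define c' where "c' i = c i + \<alpha> * ((if i = l then 1 else 0) - d i)" for i
  have cd_l: "c l = 0" "d l = 0"
    using c d insert.hyps(2) by (auto simp: projection_coeffs_def)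
  have r_perp: "inner r (v j) = 0" if "j \<in> T" for j
    using d that by (simp add: projection_coeffs_def r_def)
  have e_perp: "inner (x - lincomb v T c) (v j) = 0" if "j \<in> T" for j
    using c that by (simp add: projection_coeffs_def)
  have "lincomb v T c' = lincomb v T c - \<alpha> *\<^sub>R lincomb v T d"
    using insert.hyps(2)
    by (auto simp: lincomb_def c'_def algebra_simps scaleR_sum_right sum_subtractf
        intro!: sum.cong)
  then have comb_c': "lincomb v (insert l T) c' = lincomb v T c + \<alpha> *\<^sub>R r"
    using insert.hyps cd_l by (simp add: lincomb_def c'_def r_def algebra_simps)
  have "inner (x - lincomb v T c - \<alpha> *\<^sub>R r) (v l) = 0"
  proof -
    have "inner (lincomb v T c) r = 0" "inner (lincomb v T d) r = 0"
      by (simp_all add: lincomb_orthogonal r_perp)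
    moreover have "inner (x - lincomb v T c) (lincomb v T d) = 0"
      using projection_coeffs_orthogonal[OF c] by (simp add: inner_commute)
    moreover have "v l = r + lincomb v T d"
      by (simp add: r_def)
    ultimately have "inner (x - lincomb v T c - \<alpha> *\<^sub>R r) (v l) = inner x r - \<alpha> * inner r r"
      by (metis (no_types, lifting) inner_add_right inner_commute inner_diff_left
          inner_scaleR_left add.right_neutral diff_zero)
    also have "\<dots> = 0"
      by (cases "r = 0") (simp_all add: \<alpha>_def)
    finally show ?thesis .
  qed
  then have "projection_coeffs v (insert l T) x c'"
    using c d insert.hyps(2) e_perp r_perp
    by (auto simp: projection_coeffs_def comb_c' c'_def inner_diff_left algebra_simps)
  then show ?case by blast
qed

lemma residual_inner_self:
  assumes "projection_coeffs v S (v l) d"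
  shows "inner (v l - lincomb v S d) (v l) = inner (v l - lincomb v S d) (v l - lincomb v S d)"
  using projection_coeffs_orthogonal[OF assms, of d]
  by (simp add: inner_diff_right inner_commute)

lemma inner_lincomb_residual:
  assumes "finite T" "l \<in> T" "projection_coeffs v (T - {l}) (v l) d"
  shows "inner (lincomb v T q) (v l - lincomb v (T - {l}) d)
       = q l * inner (v l - lincomb v (T - {l}) d) (v l - lincomb v (T - {l}) d)"
proof -
  have "inner (lincomb v (T - {l}) q) (v l - lincomb v (T - {l}) d) = 0"
    using assms(3) by (rule projection_coeffs_orthogonal)
  moreover have "inner (v l) (v l - lincomb v (T - {l}) d)
      = inner (v l - lincomb v (T - {l}) d) (v l - lincomb v (T - {l}) d)"
    using residual_inner_self[OF assms(3)] by (simp add: inner_commute)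
  ultimately show ?thesis
    by (simp add: lincomb_remove[OF assms(1,2)] inner_add_left)
qed

lemma projection_coeff_eq_inner_residual:
  assumes "finite T" "l \<in> T" "projection_coeffs v T x c" "projection_coeffs v (T - {l}) (v l) d"
  shows "c l * inner (v l - lincomb v (T - {l}) d) (v l - lincomb v (T - {l}) d)
       = inner x (v l - lincomb v (T - {l}) d)"
proof -
  have perp: "inner (x - lincomb v T c) (v j) = 0" if "j \<in> T" for j
    using assms(3) that by (simp add: projection_coeffs_def)
  have "inner (lincomb v (T - {l}) d) (x - lincomb v T c) = 0"
    by (rule lincomb_orthogonal) (simp add: perp)
  then have "inner (x - lincomb v T c) (v l - lincomb v (T - {l}) d) = 0"
    using perp[OF assms(2)] by (simp add: inner_diff_right inner_commute)
  then show ?thesis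
    using inner_lincomb_residual[OF assms(1,2,4), of c] by (simp add: inner_diff_left)
qed

lemma dual_lincomb_exists:
  assumes "finite T"
    and "\<And>l. l \<in> T \<Longrightarrow> projection_coeffs v (T - {l}) (v l) (D l)"
    and "\<And>l. l \<in> T \<Longrightarrow> v l - lincomb v (T - {l}) (D l) \<noteq> 0"
  shows "\<exists>q. \<forall>i\<in>T. inner (lincomb v T q) (v i) = 1"
proof -
  define r where "r l = v l - lincomb v (T - {l}) (D l)" for l
  define y where "y = (\<Sum>l\<in>T. (1 / inner (r l) (r l)) *\<^sub>R r l)"
  have y_dual: "inner y (v i) = 1" if "i \<in> T" for i
  proof -
    have "inner (r l) (v i) = 0" if "l \<in> T" "l \<noteq> i" for l
      using assms(2)[OF that(1)] \<open>i \<in> T\<close> that(2) by (simp add: projection_coeffs_def r_def)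
    then have "(\<Sum>l\<in>T - {i}. (1 / inner (r l) (r l)) * inner (r l) (v i)) = 0"
      by (intro sum.neutral) auto
    moreover have "inner y (v i) = (\<Sum>l\<in>T. (1 / inner (r l) (r l)) * inner (r l) (v i))"
      by (simp add: y_def inner_sum_left)
    ultimately have "inner y (v i) = (1 / inner (r i) (r i)) * inner (r i) (v i)"
      using assms(1) that by (simp add: sum.remove)
    then show ?thesis
      using residual_inner_self[OF assms(2)[OF that]] assms(3)[OF that] by (simp add: r_def)
  qed
  obtain q where "projection_coeffs v T y q"
    using projection_coeffs_exist[OF assms(1)] by blast
  then have "inner (lincomb v T q) (v i) = 1" if "i \<in> T" for i
    using y_dual[OF that] that by (simp add: projection_coeffs_def inner_diff_left)
  then show ?thesis by blast
qed

lemma kern_self: "admissible_kernel a \<Longrightarrow> kern a t t = 1"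
  by (simp add: admissible_kernel_def)

lemma kern_nonneg: "admissible_kernel a \<Longrightarrow> 0 \<le> kern a t t'"
  by (cases "t = t'") (auto simp: admissible_kernel_def)

lemma norm_diff_admissible_kernel:
  assumes "admissible_kernel a"
  shows "norm (a t' - a t) = sqrt (2 - 2 * kern a t t')"
proof -
  have "inner (a t' - a t) (a t' - a t) = kern a t' t' + kern a t t - 2 * kern a t t'"
    by (simp add: kern_def inner_diff_left inner_diff_right inner_commute)
  then show ?thesis by (simp add: norm_eq_sqrt_inner kern_self[OF assms])
qed

lemma admissible_kernel_continuous:
  fixes a :: "'a::topological_space \<Rightarrow> 'h::real_inner"
  assumes "admissible_kernel a"
  shows "continuous_on UNIV a"
proof -
  have "((\<lambda>t'. sqrt (2 - 2 * kern a t t')) \<longlongrightarrow> sqrt (2 - 2 * 1)) (at t)" for t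
    using assms unfolding admissible_kernel_def by (intro tendsto_intros) auto
  then have "((\<lambda>t'. norm (a t' - a t)) \<longlongrightarrow> 0) (at t)" for t
    by (simp add: norm_diff_admissible_kernel[OF assms])
  then show ?thesis
    by (simp add: continuous_on_def tendsto_norm_zero_iff LIM_zero_iff)
qed

lemma admissible_kernel_weighted_sum_attains_max:
  fixes a :: "'a::topological_space \<Rightarrow> 'h::real_inner" and p :: "'m \<Rightarrow> 'a"
  assumes adm: "admissible_kernel a" and "finite T" "j \<in> T" and q_pos: "\<forall>l\<in>T. 0 < q l"
  shows "\<exists>t0. \<forall>t. (\<Sum>l\<in>T. q l * kern a t (p l)) \<le> (\<Sum>l\<in>T. q l * kern a t0 (p l))"
proof -
  define f where "f t = (\<Sum>l\<in>T. q l * kern a t (p l))" for t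
  define Q where "Q = sum q T"
  have "q j \<le> Q"
    unfolding Q_def using assms by (intro member_le_sum) auto
  then have Q_pos: "0 < Q" using q_pos \<open>j \<in> T\<close> by fastforce
  \<comment> \<open>Outside a compact set every kernel section is below \<open>\<epsilon>\<close>, so there \<open>f \<le> q j / 2 < f (p j)\<close>.\<close>
  define \<epsilon> where "\<epsilon> = q j / (2 * Q)"
  have "0 < \<epsilon>" using q_pos \<open>j \<in> T\<close> Q_pos by (simp add: \<epsilon>_def)
  then have "\<forall>l. \<exists>K. compact K \<and> (\<forall>t. t \<notin> K \<longrightarrow> kern a t (p l) \<le> \<epsilon>)"
    using adm unfolding admissible_kernel_def by (meson less_imp_le order_trans)
  then obtain Kf where Kf: "\<And>l. compact (Kf l)" "\<And>l t. t \<notin> Kf l \<Longrightarrow> kern a t (p l) \<le> \<epsilon>"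
    by metis
  define K where "K = insert (p j) (\<Union>l\<in>T. Kf l)"
  have "compact K"
    unfolding K_def using Kf(1) \<open>finite T\<close> by (intro compact_insert compact_UN) auto
  moreover have "continuous_on K f"
    unfolding f_def kern_def
    using continuous_on_subset[OF admissible_kernel_continuous[OF adm]]
    by (intro continuous_intros) auto
  ultimately obtain t0 where t0: "t0 \<in> K" "\<forall>t\<in>K. f t \<le> f t0"
    using continuous_attains_sup[of K f] unfolding K_def by blast
  have "q j * kern a (p j) (p j) \<le> f (p j)"
    unfolding f_def using assms kern_nonneg[OF adm] by (intro member_le_sum) auto
  then have "q j \<le> f t0"
    using t0(2) by (simp add: kern_self[OF adm] K_def)
  moreover have "f t \<le> q j / 2" if "t \<notin> K" for t
  proof -
    have "f t \<le> (\<Sum>l\<in>T. q l * \<epsilon>)"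
      unfolding f_def using that q_pos Kf(2)
      by (intro sum_mono mult_left_mono) (auto simp: K_def)
    also have "\<dots> = Q * \<epsilon>" by (simp add: Q_def sum_distrib_right)
    also have "\<dots> = q j / 2" using Q_pos by (simp add: \<epsilon>_def)
    finally show ?thesis .
  qed
  ultimately have "f t \<le> f t0" for t
    using t0(2) q_pos \<open>j \<in> T\<close> by (cases "t \<in> K") force+
  then show ?thesis unfolding f_def by blast
qed

lemma admissible_support_maximizer:
  assumes "admissible_support a \<theta>s" "T \<noteq> {}" "\<forall>l\<in>T. 0 < c l" "sum c T < 1"
    and "\<forall>t'. (\<Sum>l\<in>T. c l * kern a t' (\<theta>s l)) \<le> (\<Sum>l\<in>T. c l * kern a t (\<theta>s l))"
  shows "t \<in> \<theta>s ` T"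
  using assms(1) unfolding admissible_support_def
  by (elim allE[of _ T] allE[of _ c] conjE impE) (use assms(2-5) in auto)

lemma admissible_support_dominated:
  assumes "admissible_support a \<theta>s" "T \<noteq> {}" "\<forall>l\<in>T. 0 < c l" "sum c T < 1" "l \<notin> T"
    and "\<forall>t\<in>\<theta>s ` T. (\<Sum>l'\<in>T. c l' * kern a t (\<theta>s l')) \<le> kern a t (\<theta>s l)"
  shows "(\<Sum>l'\<in>T. c l' * kern a t (\<theta>s l')) \<le> kern a t (\<theta>s l)"
  using assms(1) unfolding admissible_support_def
  by (elim allE[of _ T] allE[of _ c] conjE impE) (use assms(2-6) in auto)

locale admissible_atoms =
  fixes a :: "'a::topological_space \<Rightarrow> 'h::real_inner"
    and \<theta>s :: "'m::finite \<Rightarrow> 'a"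
  assumes kernel: "admissible_kernel a"
    and inj: "inj \<theta>s"
    and support: "admissible_support a \<theta>s"
begin

abbreviation atom :: "'m \<Rightarrow> 'h" where
  "atom l \<equiv> a (\<theta>s l)"

definition psi :: "'m set \<Rightarrow> ('m \<Rightarrow> real) \<Rightarrow> 'a \<Rightarrow> real" where
  "psi T q t = (\<Sum>l\<in>T. q l * kern a t (\<theta>s l))"

lemma psi_eq_inner: "psi T q t = inner (a t) (lincomb atom T q)"
  by (simp add: psi_def kern_def inner_lincomb_right)

lemma psi_attains_max:
  assumes "T \<noteq> {}" "\<forall>l\<in>T. 0 < q l"
  shows "\<exists>t0. \<forall>t. psi T q t \<le> psi T q t0"
proof -
  obtain j where "j \<in> T" using assms(1) by blast
  from admissible_kernel_weighted_sum_attains_max[OF kernel _ this assms(2)]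
  show ?thesis by (simp add: psi_def)
qed

lemma psi_maximizer_in_support:
  assumes "T \<noteq> {}" "\<forall>l\<in>T. 0 < q l" "\<forall>t. psi T q t \<le> psi T q t0"
  shows "t0 \<in> \<theta>s ` T"
proof -
  \<comment> \<open>Admissibility of the support only speaks about weights of total mass below 1.\<close>
  define s where "s = 1 / (sum q T + 1)"
  have "0 \<le> sum q T" using assms(2) by (intro sum_nonneg) auto
  then have s_pos: "0 < s" and "s * sum q T < 1"
    by (simp_all add: s_def)
  have "\<forall>l\<in>T. 0 < s * q l" using assms(2) s_pos by simp
  moreover have "sum (\<lambda>l. s * q l) T < 1"
    using \<open>s * sum q T < 1\<close> by (simp add: sum_distrib_left)
  moreover have "\<forall>t. (\<Sum>l\<in>T. s * q l * kern a t (\<theta>s l)) \<le> (\<Sum>l\<in>T. s * q l * kern a t0 (\<theta>s l))"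
    using assms(3) s_pos by (simp add: psi_def mult.assoc flip: sum_distrib_left)
  ultimately show ?thesis
    by (rule admissible_support_maximizer[OF support assms(1)])
qed

lemma psi_less_max:
  assumes "T \<noteq> {}" "\<forall>l\<in>T. 0 < q l" "\<forall>t. psi T q t \<le> psi T q t0" "t \<notin> \<theta>s ` T"
  shows "psi T q t < psi T q t0"
proof (rule ccontr)
  assume "\<not> psi T q t < psi T q t0"
  then have "\<forall>t'. psi T q t' \<le> psi T q t" using assms(3) by (meson not_less order_trans)
  then show False using psi_maximizer_in_support[OF assms(1,2)] assms(4) by blast
qed

lemma psi_ge_weight:
  assumes "l \<in> T" "\<forall>i\<in>T. 0 \<le> q i"
  shows "q l \<le> psi T q (\<theta>s l)"
proof -
  have "q l * kern a (\<theta>s l) (\<theta>s l) \<le> psi T q (\<theta>s l)"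
    unfolding psi_def using assms kern_nonneg[OF kernel] by (intro member_le_sum) auto
  then show ?thesis by (simp add: kern_self[OF kernel])
qed

lemma lincomb_atoms_zero_imp_nonpos:
  assumes "lincomb atom UNIV c = 0"
  shows "c l \<le> 0"
proof (rule ccontr)
  assume "\<not> c l \<le> 0"
  define P where "P = {i. 0 < c i}"
  define N where "N = {i. c i < 0}"
  have "l \<in> P" and P_pos: "\<forall>i\<in>P. 0 < c i"
    using \<open>\<not> c l \<le> 0\<close> by (auto simp: P_def)
  have "lincomb atom UNIV c = lincomb atom (P \<union> N) c"
    unfolding lincomb_def by (intro sum.mono_neutral_right) (auto simp: P_def N_def)
  also have "\<dots> = lincomb atom P c + lincomb atom N c"
    unfolding lincomb_def by (intro sum.union_disjoint) (auto simp: P_def N_def)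
  finally have "lincomb atom P c = lincomb atom N (\<lambda>i. - c i)"
    using assms by (simp add: lincomb_def sum_negf eq_neg_iff_add_eq_0)
  then have psi_eq: "psi P c = psi N (\<lambda>i. - c i)"
    by (simp add: psi_eq_inner fun_eq_iff)
  obtain t0 where t0: "\<forall>t. psi P c t \<le> psi P c t0"
    using psi_attains_max[of P c] \<open>l \<in> P\<close> P_pos by blast
  show False
  proof (cases "N = {}")
    case True
    then have "psi P c (\<theta>s l) = 0" by (simp add: psi_eq psi_def)
    moreover have "c l \<le> psi P c (\<theta>s l)"
      using P_pos by (intro psi_ge_weight[OF \<open>l \<in> P\<close>]) (simp add: less_imp_le)
    ultimately show False using \<open>\<not> c l \<le> 0\<close> by simp
  next
    case False
    have "t0 \<in> \<theta>s ` P" by (rule psi_maximizer_in_support) (use \<open>l \<in> P\<close> P_pos t0 in auto)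
    moreover have "t0 \<in> \<theta>s ` N"
      by (rule psi_maximizer_in_support) (use False t0 in \<open>auto simp: psi_eq N_def\<close>)
    ultimately show False using inj by (auto simp: P_def N_def dest: injD)
  qed
qed

lemma lincomb_atoms_independent:
  assumes "lincomb atom UNIV c = 0"
  shows "c l = 0"
proof -
  have "lincomb atom UNIV (\<lambda>i. - c i) = 0"
    using assms by (simp add: lincomb_def sum_negf)
  then show ?thesis
    using lincomb_atoms_zero_imp_nonpos[OF assms, of l]
      lincomb_atoms_zero_imp_nonpos[of "\<lambda>i. - c i" l] by simp
qed

lemma residual_nonzero:
  assumes "l \<notin> S"
  shows "atom l - lincomb atom S d \<noteq> 0"
proof
  assume "atom l - lincomb atom S d = 0"
  moreover have "lincomb atom UNIV (\<lambda>i. (if i \<in> {l} then 1 else 0) - (if i \<in> S then d i else 0))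
      = lincomb atom UNIV (\<lambda>i. if i \<in> {l} then 1 else 0)
      - lincomb atom UNIV (\<lambda>i. if i \<in> S then d i else 0)"
    by (simp add: lincomb_def scaleR_diff_left sum_subtractf)
  moreover have "lincomb atom UNIV (\<lambda>i. if i \<in> {l} then 1 else 0) = atom l"
    using lincomb_restrict_UNIV[of atom "{l}" "\<lambda>_. 1"] by (simp add: lincomb_def)
  ultimately show False
    using lincomb_atoms_independent[of _ l] assms by (fastforce simp: lincomb_restrict_UNIV)
qed

lemma residual_inner_nonneg:
  assumes proj: "projection_coeffs atom S (atom l) d"
    and d_nonneg: "\<forall>i. 0 \<le> d i" and "sum d S < 1" and "l \<notin> S"
  shows "0 \<le> inner (a t) (atom l - lincomb atom S d)"
proof -
  define U where "U = {j\<in>S. 0 < d j}"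
  have comb_U: "lincomb atom S d = lincomb atom U d"
    unfolding lincomb_def U_def using d_nonneg
    by (intro sum.mono_neutral_right) (auto simp: order_le_less)
  have "sum d U = sum d S"
    unfolding U_def using d_nonneg by (intro sum.mono_neutral_left) (auto simp: order_le_less)
  show ?thesis
  proof (cases "U = {}")
    case True
    then show ?thesis
      using comb_U kern_nonneg[OF kernel, of t "\<theta>s l"] by (simp add: lincomb_def kern_def)
  next
    case False
    \<comment> \<open>On \<open>\<theta>s ` U\<close> the two sides agree: the residual is orthogonal to every atom of \<open>S\<close>.\<close>
    have "psi U d t' \<le> kern a t' (\<theta>s l)" if "t' \<in> \<theta>s ` U" for t'
    proof -
      obtain j where "j \<in> S" "t' = \<theta>s j" using \<open>t' \<in> \<theta>s ` U\<close> by (auto simp: U_def)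
      then have "inner (atom l - lincomb atom S d) (a t') = 0"
        using proj by (simp add: projection_coeffs_def)
      then show ?thesis
        by (simp add: psi_eq_inner kern_def comb_U inner_diff_left inner_diff_right inner_commute)
    qed
    then have "psi U d t \<le> kern a t (\<theta>s l)"
      unfolding psi_def
    proof (intro admissible_support_dominated[OF support False])
      show "sum d U < 1" using \<open>sum d U = sum d S\<close> \<open>sum d S < 1\<close> by simp
    qed (use \<open>l \<notin> S\<close> in \<open>auto simp: U_def psi_def\<close>)
    then show ?thesis
      by (simp add: psi_eq_inner kern_def comb_U inner_diff_right)
  qed
qed

lemma projection_coeffs_nonneg_step:
  assumes D: "\<And>l. l \<in> T \<Longrightarrow> projection_coeffs atom (T - {l}) (atom l) (D l)"
    and D_IH: "\<And>l. l \<in> T \<Longrightarrow> (\<forall>i. 0 \<le> D l i) \<and> sum (D l) (T - {l}) < 1"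
    and c: "projection_coeffs atom T (a t) c"
  shows "0 \<le> c l"
proof (cases "l \<in> T")
  case False
  then show ?thesis using c by (simp add: projection_coeffs_def)
next
  case True
  define r where "r = atom l - lincomb atom (T - {l}) (D l)"
  have "c l * inner r r = inner (a t) r"
    unfolding r_def by (rule projection_coeff_eq_inner_residual[OF finite True c D[OF True]])
  moreover have "0 \<le> inner (a t) r"
    unfolding r_def using D_IH[OF True] by (intro residual_inner_nonneg[OF D[OF True]]) auto
  moreover have "0 < inner r r"
    using residual_nonzero[of l "T - {l}"] by (simp add: r_def)
  ultimately show ?thesis
    using zero_le_mult_iff[of "c l" "inner r r"] by linarith
qed

lemma projection_coeffs_sum_less_1_step:
  assumes D: "\<And>l. l \<in> T \<Longrightarrow> projection_coeffs atom (T - {l}) (atom l) (D l)"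
    and D_IH: "\<And>l. l \<in> T \<Longrightarrow> (\<forall>i. 0 \<le> D l i) \<and> sum (D l) (T - {l}) < 1"
    and "t \<notin> \<theta>s ` T" and c: "projection_coeffs atom T (a t) c"
  shows "sum c T < 1"
proof (cases "T = {}")
  case False
  have r_nonzero: "atom l - lincomb atom (T - {l}) (D l) \<noteq> 0" for l
    by (rule residual_nonzero) simp
  obtain q where q: "\<forall>i\<in>T. inner (lincomb atom T q) (atom i) = 1"
    using dual_lincomb_exists[OF finite D r_nonzero] by blast
  have q_pos: "\<forall>l\<in>T. 0 < q l"
  proof
    fix l assume "l \<in> T"
    define r where "r = atom l - lincomb atom (T - {l}) (D l)"
    have "q l * inner r r = inner (lincomb atom T q) r"
      unfolding r_def
      by (rule inner_lincomb_residual[OF finite \<open>l \<in> T\<close> D[OF \<open>l \<in> T\<close>], symmetric])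
    also have "\<dots> = 1 - sum (D l) (T - {l})"
      using q \<open>l \<in> T\<close> by (simp add: r_def inner_diff_right inner_lincomb_right)
    finally have "0 < q l * inner r r"
      using D_IH[OF \<open>l \<in> T\<close>] by simp
    then show "0 < q l"
      using zero_less_mult_iff[of "q l" "inner r r"] inner_ge_zero[of r] by linarith
  qed
  obtain t0 where t0: "\<forall>t. psi T q t \<le> psi T q t0"
    using psi_attains_max[OF False q_pos] by blast
  have "psi T q t0 = 1"
  proof -
    obtain j where "j \<in> T" "t0 = \<theta>s j"
      using psi_maximizer_in_support[OF False q_pos t0] by blast
    then show ?thesis using q by (simp add: psi_eq_inner inner_commute)
  qed
  have "sum c T = inner (lincomb atom T q) (lincomb atom T c)"
    using q by (simp add: inner_lincomb_right)
  also have "\<dots> = psi T q t"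
    using projection_coeffs_orthogonal[OF c, of q]
    by (simp add: psi_eq_inner inner_diff_right inner_commute)
  also have "\<dots> < psi T q t0"
    using psi_less_max[OF False q_pos t0] \<open>t \<notin> \<theta>s ` T\<close> .
  finally show ?thesis using \<open>psi T q t0 = 1\<close> by simp
qed simp

lemma projection_coeffs_nonneg_sum_less_1:
  assumes "t \<notin> \<theta>s ` T" "projection_coeffs atom T (a t) c"
  shows "(\<forall>l. 0 \<le> c l) \<and> sum c T < 1"
  using finite[of T] assms
proof (induction T arbitrary: t c rule: finite_psubset_induct)
  case (psubset T)
  have "\<forall>l. \<exists>d. projection_coeffs atom (T - {l}) (atom l) d"
    using projection_coeffs_exist[OF finite] by blast
  then obtain D where "\<forall>l. projection_coeffs atom (T - {l}) (atom l) (D l)"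
    by (rule choice[THEN exE])
  then have D: "projection_coeffs atom (T - {l}) (atom l) (D l)" for l
    by blast
  have D_IH: "(\<forall>i. 0 \<le> D l i) \<and> sum (D l) (T - {l}) < 1" if "l \<in> T" for l
  proof (rule psubset.IH)
    show "T - {l} \<subset> T" using that by blast
    show "\<theta>s l \<notin> \<theta>s ` (T - {l})" using inj by (simp add: inj_image_mem_iff)
  qed (rule D)
  show ?case
    by (intro conjI allI projection_coeffs_nonneg_step[OF D D_IH psubset.prems(2)]
        projection_coeffs_sum_less_1_step[OF D D_IH psubset.prems])
qed

end

lemma gram_mult_vec:
  "(gram a \<theta>s *v x) $ j = inner (a (\<theta>s j)) (lincomb (\<lambda>l. a (\<theta>s l)) UNIV (($) x))"
  by (simp add: gram_def matrix_vector_mult_def kern_def inner_lincomb_right mult.commute)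

lemma gram_invertible:
  assumes "\<And>c l. lincomb (\<lambda>l. a (\<theta>s l)) UNIV c = 0 \<Longrightarrow> c l = 0"
  shows "invertible (gram a \<theta>s)"
proof -
  have "x = 0" if "gram a \<theta>s *v x = 0" for x
  proof -
    define v where "v = lincomb (\<lambda>l. a (\<theta>s l)) UNIV (($) x)"
    have "inner v v = (\<Sum>l\<in>UNIV. x $ l * (gram a \<theta>s *v x) $ l)"
      by (simp add: v_def gram_mult_vec inner_lincomb_left)
    then have "v = 0" using that by simp
    then show "x = 0" using assms by (simp add: v_def vec_eq_iff)
  qed
  then show ?thesis
    using matrix_left_invertible_ker invertible_left_inverse by blast
qed

lemma matrix_inv_right: "invertible A \<Longrightarrow> A ** matrix_inv A = mat 1"
  unfolding invertible_def matrix_inv_def by (rule someI_ex[THEN conjunct1])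

lemma gram_solution_projection_coeffs:
  assumes "invertible (gram a \<theta>s)"
  shows "projection_coeffs (\<lambda>l. a (\<theta>s l)) UNIV (a \<theta>)
           (($) (matrix_inv (gram a \<theta>s) *v gvec a \<theta>s \<theta>))"
proof -
  define w where "w = matrix_inv (gram a \<theta>s) *v gvec a \<theta>s \<theta>"
  have "gram a \<theta>s *v w = gvec a \<theta>s \<theta>"
    by (simp add: w_def matrix_vector_mul_assoc matrix_inv_right[OF assms])
  then have "inner (a (\<theta>s j)) (lincomb (\<lambda>l. a (\<theta>s l)) UNIV (($) w)) = inner (a \<theta>) (a (\<theta>s j))"
    for j
    by (metis gram_mult_vec gvec_def kern_def vec_lambda_beta)
  then have "inner (a \<theta> - lincomb (\<lambda>l. a (\<theta>s l)) UNIV (($) w)) (a (\<theta>s j)) = 0" for j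
    by (metis inner_commute inner_diff_left diff_self)
  then show ?thesis
    by (simp add: projection_coeffs_def w_def)
qed

theorem mainTheorem3:
  fixes a :: "real^'D \<Rightarrow> 'h::{real_inner,complete_space}"
    and \<theta>s :: "'m::finite \<Rightarrow> real^'D"
  assumes "admissible_kernel a"
    and "inj \<theta>s"
    and "admissible_support a \<theta>s"
  shows "(\<forall>c. (\<Sum>l\<in>UNIV. c l *\<^sub>R a (\<theta>s l)) = 0 \<longrightarrow> (\<forall>l. c l = 0)) \<and>
         (\<forall>\<theta>. \<theta> \<notin> range \<theta>s \<longrightarrow>
            (\<Sum>l\<in>UNIV. \<bar>(matrix_inv (gram a \<theta>s) *v gvec a \<theta>s \<theta>) $ l\<bar>) < 1)"
proof -
  interpret admissible_atoms a \<theta>s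
    using assms by unfold_locales
  have "invertible (gram a \<theta>s)"
    by (rule gram_invertible) (rule lincomb_atoms_independent)
  have "(\<Sum>l\<in>UNIV. \<bar>(matrix_inv (gram a \<theta>s) *v gvec a \<theta>s \<theta>) $ l\<bar>) < 1"
    if "\<theta> \<notin> range \<theta>s" for \<theta>
    using projection_coeffs_nonneg_sum_less_1[OF that
        gram_solution_projection_coeffs[OF \<open>invertible (gram a \<theta>s)\<close>]]
    by simp
  then show ?thesis
    using lincomb_atoms_independent by (auto simp: lincomb_def)
qed

end
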